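(* Let $Q$ be a function from a recursive subset of $\mathbb{N}^3$ to $\mathbb{N}$ such that $Q(n,k,s)\in B^n$ whenever defined, and let $r>1$. Then there exists a coloring function $c:\mathbb{N}\rightarrow r=\{0,\dots,r-1\}$, uniformly recursive in $Q$, such that for every $w\in\mathbb{Z}^+$ and every $n<\lambda(w)$, if $Q(n,\lambda(w),\mu(w))$ is defined then $c(w+Q(n,\lambda(w),\mu(w)))\equiv c(w)+1\pmod r$.
   Context: For $x=\sum_{i=0}^{k}2^{n_i}\in\mathbb{Z}^+$ with $n_0<\cdots<n_k$, set $\mu(x)=n_k$ and $\lambda(x)=n_0$. For each $n$, $B^n=\{x\in\mathbb{Z}^+:\mu(x)=n\}$. *)

theory Defs
  imports Main "HOL-Library.Nat_Bijection"
begin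

definition bits :: "nat \<Rightarrow> nat set" where
  "bits x = {n. odd (x div 2 ^ n)}"

definition mu :: "nat \<Rightarrow> nat" where
  "mu x = Max (bits x)"

definition lam :: "nat \<Rightarrow> nat" where
  "lam x = Min (bits x)"

definition B :: "nat \<Rightarrow> nat set" where
  "B n = {x. x > 0 \<and> mu x = n}"

datatype rf = Zero | Succ | Proj nat | Comp rf "rf list" | Prim rf rf | Mu rf | Orc

inductive eval :: "(nat \<Rightarrow> nat) \<Rightarrow> rf \<Rightarrow> nat list \<Rightarrow> nat \<Rightarrow> bool" for f where
  ev_zero: "eval f Zero xs 0"
| ev_succ: "eval f Succ (x # xs) (Suc x)"
| ev_proj: "i < length xs \<Longrightarrow> eval f (Proj i) xs (xs ! i)"
| ev_orc: "eval f Orc (x # xs) (f x)"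
| ev_comp: "list_all2 (\<lambda>g y. eval f g xs y) gs ys \<Longrightarrow> eval f h ys z \<Longrightarrow> eval f (Comp h gs) xs z"
| ev_prim0: "eval f g xs z \<Longrightarrow> eval f (Prim g h) (0 # xs) z"
| ev_primS: "eval f (Prim g h) (n # xs) y \<Longrightarrow> eval f h (y # n # xs) z
             \<Longrightarrow> eval f (Prim g h) (Suc n # xs) z"
| ev_mu: "eval f g (n # xs) 0 \<Longrightarrow> (\<forall>m<n. \<exists>y. eval f g (m # xs) y \<and> y > 0)
             \<Longrightarrow> eval f (Mu g) xs n"

definition computes :: "(nat \<Rightarrow> nat) \<Rightarrow> rf \<Rightarrow> (nat \<Rightarrow> nat) \<Rightarrow> bool" where
  "computes f e c \<longleftrightarrow> (\<forall>x. eval f e [x] (c x))"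

definition recursive_set3 :: "(nat \<times> nat \<times> nat) set \<Rightarrow> bool" where
  "recursive_set3 D \<longleftrightarrow> (\<exists>e. \<forall>n k s. eval (\<lambda>_. 0) e [n, k, s] (if (n, k, s) \<in> D then 1 else 0))"

definition oracle_of :: "(nat \<Rightarrow> nat \<Rightarrow> nat \<Rightarrow> nat option) \<Rightarrow> nat \<Rightarrow> nat" where
  "oracle_of Q x = (case prod_decode x of (n, y) \<Rightarrow> (case prod_decode y of (k, s) \<Rightarrow>
      (case Q n k s of None \<Rightarrow> 0 | Some v \<Rightarrow> Suc v)))"

end

theory Submission
  imports Defs
begin

text \<open>
  For each set bit m of a positive x, the prefix of x at m keeps the bits of x from m upwards.
  The colour of x is the sum, modulo r, of increments delta p over these prefixes p.  Given
  w > 0, n < lam w and v = Q(n, lam w, mu w) in B^n, put u = w + 2^n.  The prefixes of w + v are those of w, then u itself, then prefixes whose lowest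
  set bit is below n; choosing delta u as 1 minus the contribution of the latter makes the colour
  of w + v one more than that of w.  Those prefixes have a smaller lowest bit than u, so this
  defines delta by recursion on the lowest set bit.  The recursion is computable from the oracle:
  the values of its t-th approximation on [0, 2^K) are the base-r digits of a single number,
  obtained by primitive recursion on t.
\<close>

section \<open>Computability relative to an oracle\<close>

definition computable :: "nat \<Rightarrow> ((nat \<Rightarrow> nat) \<Rightarrow> nat list \<Rightarrow> nat) \<Rightarrow> bool" where
  "computable k F \<longleftrightarrow> (\<exists>e. \<forall>f xs. length xs = k \<longrightarrow> eval f e xs (F f xs))"

definition decidable :: "nat \<Rightarrow> ((nat \<Rightarrow> nat) \<Rightarrow> nat list \<Rightarrow> bool) \<Rightarrow> bool" where
  "decidable k P \<longleftrightarrow> computable k (\<lambda>f xs. of_bool (P f xs))"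

named_theorems computable_intros

lemma computable_cong:
  assumes "computable k F" "\<And>f xs. length xs = k \<Longrightarrow> F f xs = G f xs"
  shows "computable k G"
  using assms unfolding computable_def by metis

lemma computable_zero: "computable k (\<lambda>f xs. 0)"
  unfolding computable_def by (auto intro: eval.intros)

lemma computable_nth [computable_intros]: "i < k \<Longrightarrow> computable k (\<lambda>f xs. xs ! i)"
  unfolding computable_def by (auto intro: eval.intros)

lemma programs_for_computable_list:
  assumes "\<forall>G\<in>set Gs. computable k G"
  shows "\<exists>es. \<forall>f xs. length xs = k \<longrightarrow> list_all2 (\<lambda>e y. eval f e xs y) es (map (\<lambda>G. G f xs) Gs)"
  using assms
proof (induction Gs)
  case Nil
  show ?case by simp
next
  case (Cons G Gs)
  then obtain es where "\<forall>f xs. length xs = k \<longrightarrow> list_all2 (\<lambda>e y. eval f e xs y) es (map (\<lambda>G. G f xs) Gs)"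
    by auto
  moreover obtain e where "\<forall>f xs. length xs = k \<longrightarrow> eval f e xs (G f xs)"
    using Cons.prems unfolding computable_def by auto
  ultimately show ?case by (intro exI[of _ "e # es"]) auto
qed

lemma computable_compose:
  assumes "computable (length Gs) H" "\<forall>G\<in>set Gs. computable k G"
  shows "computable k (\<lambda>f xs. H f (map (\<lambda>G. G f xs) Gs))"
proof -
  obtain es where es: "\<forall>f xs. length xs = k \<longrightarrow> list_all2 (\<lambda>e y. eval f e xs y) es (map (\<lambda>G. G f xs) Gs)"
    using programs_for_computable_list[OF assms(2)] by blast
  obtain e where e: "\<forall>f ys. length ys = length Gs \<longrightarrow> eval f e ys (H f ys)"
    using assms(1) unfolding computable_def by blast
  show ?thesis
    unfolding computable_def
    by (intro exI[of _ "Comp e es"]) (auto intro!: eval.ev_comp es[rule_format] e[rule_format])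
qed

lemma computable_compose_unary:
  assumes "computable 1 (\<lambda>f xs. H f (xs ! 0))" "computable k A"
  shows "computable k (\<lambda>f xs. H f (A f xs))"
  using computable_compose[of "[A]" "\<lambda>f xs. H f (xs ! 0)" k] assms by simp

lemma computable_compose_binary:
  assumes "computable 2 (\<lambda>f xs. H f (xs ! 0) (xs ! 1))" "computable k A" "computable k C"
  shows "computable k (\<lambda>f xs. H f (A f xs) (C f xs))"
  using computable_compose[of "[A, C]" "\<lambda>f xs. H f (xs ! 0) (xs ! 1)" k] assms
  by (simp add: numeral_2_eq_2)

lemma computable_Suc [computable_intros]:
  assumes "computable k A"
  shows "computable k (\<lambda>f xs. Suc (A f xs))"
proof (rule computable_compose_unary[OF _ assms])
  show "computable 1 (\<lambda>f xs. Suc (xs ! 0))"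
    unfolding computable_def by (auto intro!: exI[of _ Succ] simp: length_Suc_conv intro: eval.intros)
qed

lemma computable_oracle [computable_intros]:
  assumes "computable k A"
  shows "computable k (\<lambda>f xs. f (A f xs))"
proof (rule computable_compose_unary[OF _ assms])
  show "computable 1 (\<lambda>f xs. f (xs ! 0))"
    unfolding computable_def by (auto intro!: exI[of _ Orc] simp: length_Suc_conv intro: eval.intros)
qed

lemma computable_const [computable_intros]: "computable k (\<lambda>f xs. c)"
proof (induction c)
  case 0
  show ?case by (rule computable_zero)
next
  case (Suc c)
  then show ?case by (rule computable_Suc)
qed

lemma computable_drop:
  assumes "computable k F"
  shows "computable (j + k) (\<lambda>f xs. F f (drop j xs))"
proof -
  have "computable (j + k) (\<lambda>f xs. F f (map (\<lambda>G. G f xs) (map (\<lambda>i f xs. xs ! (j + i)) [0..<k])))"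
    using assms by (intro computable_compose) (auto intro: computable_nth)
  then show ?thesis
    by (rule computable_cong) (auto intro!: arg_cong[where f = "F _"] nth_equalityI)
qed

lemma computable_drop_nth [computable_intros]: "i + j < k \<Longrightarrow> computable k (\<lambda>f xs. drop j xs ! i)"
  by (rule computable_cong[OF computable_nth[of "j + i"]]) auto

lemma computable_Prim:
  assumes "computable k G" "computable (Suc (Suc k)) H"
  shows "computable (Suc k) (\<lambda>f xs. rec_nat (G f (tl xs)) (\<lambda>n acc. H f (acc # n # tl xs)) (hd xs))"
proof -
  obtain eg where eg: "\<forall>f xs. length xs = k \<longrightarrow> eval f eg xs (G f xs)"
    using assms(1) unfolding computable_def by blast
  obtain eh where eh: "\<forall>f xs. length xs = Suc (Suc k) \<longrightarrow> eval f eh xs (H f xs)"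
    using assms(2) unfolding computable_def by blast
  have "eval f (Prim eg eh) (n # ys) (rec_nat (G f ys) (\<lambda>n acc. H f (acc # n # ys)) n)"
    if "length ys = k" for f ys n
  proof (induction n)
    case 0
    show ?case using that eg by (auto intro: eval.ev_prim0)
  next
    case (Suc n)
    then show ?case using that eh by (auto intro: eval.ev_primS)
  qed
  then show ?thesis
    unfolding computable_def by (intro exI[of _ "Prim eg eh"]) (auto simp: length_Suc_conv)
qed

lemma computable_rec_nat:
  assumes "computable k G" "computable (Suc (Suc k)) (\<lambda>f ys. H f (ys ! 1) (ys ! 0) (drop 2 ys))"
    and "computable k N"
  shows "computable k (\<lambda>f xs. rec_nat (G f xs) (\<lambda>n acc. H f n acc xs) (N f xs))"
proof -
  have P: "computable (Suc k) (\<lambda>f xs. rec_nat (G f (tl xs)) (\<lambda>n acc. H f n acc (tl xs)) (hd xs))"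
    using computable_Prim[OF assms(1,2)] by simp
  then have P': "computable k (\<lambda>f xs. (\<lambda>f ys. rec_nat (G f (tl ys)) (\<lambda>n acc. H f n acc (tl ys)) (hd ys))
      f (map (\<lambda>G. G f xs) (N # map (\<lambda>i f xs. xs ! i) [0..<k])))"
    using P assms(3) by (intro computable_compose) (auto intro: computable_nth)
  have "map (\<lambda>i. xs ! i) [0..<k] = xs" if "length xs = k" for xs :: "nat list"
    using that map_nth[of xs] by (simp add: o_def)
  then show ?thesis
    by (intro computable_cong[OF P']) (simp add: o_def)
qed

lemma computable_funpow [computable_intros]:
  assumes "computable k X" "computable (Suc (Suc k)) (\<lambda>f ys. G f (ys ! 0) (drop 2 ys))"
    and "computable k N"
  shows "computable k (\<lambda>f xs. ((\<lambda>acc. G f acc xs) ^^ N f xs) (X f xs))"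
proof -
  have "((\<lambda>acc. g acc) ^^ n) x = rec_nat x (\<lambda>_ acc. g acc) n" for g :: "nat \<Rightarrow> nat" and n x
    by (induction n) simp_all
  then show ?thesis
    using computable_rec_nat[OF assms(1) _ assms(3), of "\<lambda>f n acc xs. G f acc xs"] assms(2) by simp
qed

lemma computable_add [computable_intros]:
  assumes "computable k A" "computable k C"
  shows "computable k (\<lambda>f xs. A f xs + C f xs)"
proof -
  have "computable k (\<lambda>f xs. (Suc ^^ C f xs) (A f xs))"
    by (intro computable_intros assms | simp)+
  then show ?thesis by (simp add: add.commute)
qed

lemma computable_decrement [computable_intros]:
  assumes "computable k A"
  shows "computable k (\<lambda>f xs. A f xs - 1)"
proof -
  have "computable k (\<lambda>f xs. rec_nat 0 (\<lambda>n acc. n) (A f xs))"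
    by (intro computable_intros computable_rec_nat assms | simp)+
  moreover have "rec_nat 0 (\<lambda>n acc. n) m = m - 1" for m :: nat
    by (cases m) simp_all
  ultimately show ?thesis by simp
qed

lemma computable_diff [computable_intros]:
  assumes "computable k A" "computable k C"
  shows "computable k (\<lambda>f xs. A f xs - C f xs)"
proof -
  have "computable k (\<lambda>f xs. ((\<lambda>a. a - 1) ^^ C f xs) (A f xs))"
    by (intro computable_intros assms | simp)+
  moreover have "((\<lambda>a. a - 1) ^^ n) a = a - n" for a n :: nat
    by (induction n) simp_all
  ultimately show ?thesis by simp
qed

lemma computable_mult [computable_intros]:
  assumes "computable k A" "computable k C"
  shows "computable k (\<lambda>f xs. A f xs * C f xs)"
proof -
  have "computable k (\<lambda>f xs. ((\<lambda>acc. acc + A f xs) ^^ C f xs) 0)"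
    by (intro computable_intros computable_drop[of k A 2, simplified] assms | simp)+
  moreover have "((\<lambda>acc. acc + a) ^^ n) 0 = a * n" for a n :: nat
    by (induction n) simp_all
  ultimately show ?thesis by simp
qed

lemma computable_power [computable_intros]:
  assumes "computable k A" "computable k C"
  shows "computable k (\<lambda>f xs. A f xs ^ C f xs)"
proof -
  have "computable k (\<lambda>f xs. ((\<lambda>acc. A f xs * acc) ^^ C f xs) 1)"
    by (intro computable_intros computable_drop[of k A 2, simplified] assms | simp)+
  moreover have "((\<lambda>acc. a * acc) ^^ n) 1 = a ^ n" for a n :: nat
    by (induction n) simp_all
  ultimately show ?thesis by simp
qed

lemma computable_sum [computable_intros]:
  assumes "computable (Suc k) (\<lambda>f ys. A f (ys ! 0) (drop 1 ys))" "computable k N"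
  shows "computable k (\<lambda>f xs. \<Sum>i<N f xs. A f i xs)"
proof -
  have "computable (Suc (Suc k)) (\<lambda>f ys. A f (ys ! 1) (drop 2 ys))"
    by (rule computable_cong[OF computable_drop[OF assms(1), of 1, simplified]]) (simp add: numeral_2_eq_2)
  then have "computable (Suc (Suc k)) (\<lambda>f ys. ys ! 0 + A f (ys ! 1) (drop 2 ys))"
    by (intro computable_intros) simp
  then have "computable k (\<lambda>f xs. rec_nat 0 (\<lambda>i acc. acc + A f i xs) (N f xs))"
    by (intro computable_rec_nat computable_zero assms(2)) (simp add: add.commute)
  moreover have "(\<Sum>i<n. a i) = rec_nat 0 (\<lambda>i acc. acc + a i) n" for a :: "nat \<Rightarrow> nat" and n
    by (induction n) simp_all
  ultimately show ?thesis by simp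
qed

lemma computable_of_bool [computable_intros]:
  "decidable k P \<Longrightarrow> computable k (\<lambda>f xs. of_bool (P f xs))"
  unfolding decidable_def .

lemma decidable_le [computable_intros]:
  assumes "computable k A" "computable k C"
  shows "decidable k (\<lambda>f xs. A f xs \<le> C f xs)"
proof -
  have "computable k (\<lambda>f xs. 1 - (A f xs - C f xs))"
    by (intro computable_intros assms)
  then show ?thesis
    unfolding decidable_def by (rule computable_cong) simp
qed

lemma decidable_not [computable_intros]:
  assumes "decidable k P"
  shows "decidable k (\<lambda>f xs. \<not> P f xs)"
proof -
  have "computable k (\<lambda>f xs. 1 - of_bool (P f xs))"
    by (intro computable_intros assms)
  then show ?thesis
    unfolding decidable_def by (rule computable_cong) simp
qed

lemma decidable_conj [computable_intros]:
  assumes "decidable k P" "decidable k P'"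
  shows "decidable k (\<lambda>f xs. P f xs \<and> P' f xs)"
proof -
  have "computable k (\<lambda>f xs. of_bool (P f xs) * of_bool (P' f xs))"
    by (intro computable_intros assms)
  then show ?thesis
    unfolding decidable_def by (rule computable_cong) simp
qed

lemma decidable_eq [computable_intros]:
  assumes "computable k A" "computable k C"
  shows "decidable k (\<lambda>f xs. A f xs = C f xs)"
proof -
  have "decidable k (\<lambda>f xs. A f xs \<le> C f xs \<and> C f xs \<le> A f xs)"
    by (intro computable_intros assms)
  then show ?thesis by (simp add: order_eq_iff)
qed

lemma decidable_less [computable_intros]:
  assumes "computable k A" "computable k C"
  shows "decidable k (\<lambda>f xs. A f xs < C f xs)"
proof -
  have "decidable k (\<lambda>f xs. \<not> C f xs \<le> A f xs)"
    by (intro computable_intros assms)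
  then show ?thesis by (simp add: not_le)
qed

lemma computable_If [computable_intros]:
  assumes "decidable k P" "computable k A" "computable k C"
  shows "computable k (\<lambda>f xs. if P f xs then A f xs else C f xs)"
proof -
  have "computable k (\<lambda>f xs. of_bool (P f xs) * A f xs + (1 - of_bool (P f xs)) * C f xs)"
    by (intro computable_intros assms)
  then show ?thesis by (rule computable_cong) simp
qed

lemma sum_of_bool_less: "d \<le> a \<Longrightarrow> (\<Sum>m<a. of_bool (m < d) :: nat) = d"
proof -
  assume "d \<le> a"
  then have "{..<a} \<inter> {m. m < d} = {..<d}" by auto
  then show ?thesis by (simp add: sum.If_cases)
qed

lemma div_eq_count: "a div b = (if b = 0 then 0 else \<Sum>q<a. of_bool (Suc q * b \<le> a))"
proof (cases "b = 0")
  case False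
  then have "Suc q * b \<le> a \<longleftrightarrow> q < a div b" for q
    using less_eq_div_iff_mult_less_eq[of b "Suc q" a] by (simp add: Suc_le_eq)
  then have "(\<Sum>q<a. of_bool (Suc q * b \<le> a)) = (\<Sum>q<a. of_bool (q < a div b) :: nat)"
    by simp
  also have "\<dots> = a div b"
    using div_le_dividend by (rule sum_of_bool_less)
  finally show ?thesis using False by simp
qed simp

lemma computable_div [computable_intros]:
  assumes "computable k A" "computable k C"
  shows "computable k (\<lambda>f xs. A f xs div C f xs)"
proof -
  have "computable k (\<lambda>f xs. if C f xs = 0 then 0 else \<Sum>q<A f xs. of_bool (Suc q * C f xs \<le> A f xs))"
    by (intro computable_intros assms computable_drop[of k _ 1, simplified] | simp)+
  then show ?thesis by (rule computable_cong) (simp flip: div_eq_count)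
qed

lemma computable_mod [computable_intros]:
  assumes "computable k A" "computable k C"
  shows "computable k (\<lambda>f xs. A f xs mod C f xs)"
proof -
  have "computable k (\<lambda>f xs. A f xs - C f xs * (A f xs div C f xs))"
    by (intro computable_intros assms)
  then show ?thesis by (rule computable_cong) (simp add: minus_mult_div_eq_mod)
qed

section \<open>Binary expansions\<close>

lemma less_if_power_le: "2 ^ n \<le> u \<Longrightarrow> n < (u::nat)"
  using less_exp[of n] by linarith

lemma less_if_power_dvd: "0 < u \<Longrightarrow> 2 ^ n dvd u \<Longrightarrow> n < (u::nat)"
  using less_if_power_le dvd_imp_le by blast

lemma finite_bits: "finite (bits u)"
proof (rule finite_subset)
  show "bits u \<subseteq> {..<u}"
  proof
    fix n assume "n \<in> bits u"
    then have "\<not> u < 2 ^ n" by (auto simp: bits_def)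
    then show "n \<in> {..<u}" by (simp add: less_if_power_le not_less)
  qed
qed simp

lemma exact_power_dvd_exists:
  assumes "0 < (u::nat)"
  obtains n where "2 ^ n dvd u" "\<not> 2 ^ Suc n dvd u"
proof
  let ?S = "{n. 2 ^ n dvd u}"
  have fin: "finite ?S"
    using less_if_power_dvd[OF assms] by (intro finite_subset[of ?S "{..<u}"]) auto
  have "0 \<in> ?S" by simp
  then show "2 ^ Max ?S dvd u" using Max_in[OF fin] by blast
  show "\<not> 2 ^ Suc (Max ?S) dvd u"
    using Max_ge[OF fin, of "Suc (Max ?S)"] by auto
qed

lemma power_bounds_exist:
  assumes "0 < (u::nat)"
  obtains s where "2 ^ s \<le> u" "u < 2 ^ Suc s"
proof
  let ?S = "{s. 2 ^ s \<le> u}"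
  have fin: "finite ?S"
    using less_if_power_le by (intro finite_subset[of ?S "{..<u}"]) auto
  have "0 \<in> ?S" using assms by simp
  then show "2 ^ Max ?S \<le> u" using Max_in[OF fin] by blast
  show "u < 2 ^ Suc (Max ?S)"
    using Max_ge[OF fin, of "Suc (Max ?S)"] not_le by (auto simp del: power_Suc)
qed

lemma lam_eqI:
  assumes "2 ^ n dvd u" "\<not> 2 ^ Suc n dvd u"
  shows "lam u = n"
  unfolding lam_def
proof (rule Min_eqI[OF finite_bits])
  obtain q where q: "u = 2 ^ n * q" using assms(1) ..
  with assms(2) have "odd q" by auto
  then show "n \<in> bits u" using q by (simp add: bits_def)
  fix m assume "m \<in> bits u"
  show "n \<le> m"
  proof (rule ccontr)
    assume "\<not> n \<le> m"
    then have "(2::nat) ^ n = 2 ^ m * 2 ^ (n - m)" by (simp flip: power_add)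
    then have "u div 2 ^ m = 2 ^ (n - m) * q" using q by simp
    with \<open>\<not> n \<le> m\<close> \<open>m \<in> bits u\<close> show False by (simp add: bits_def)
  qed
qed

lemma div_power_eq_1:
  assumes "2 ^ s \<le> u" "u < 2 ^ Suc s"
  shows "u div 2 ^ s = (1::nat)"
proof -
  have "1 \<le> u div 2 ^ s" "u div 2 ^ s < 2"
    using assms by (simp_all add: less_eq_div_iff_mult_less_eq div_less_iff_less_mult)
  then show ?thesis by simp
qed

lemma mu_eqI:
  assumes "2 ^ s \<le> u" "u < 2 ^ Suc s"
  shows "mu u = s"
  unfolding mu_def
proof (rule Max_eqI[OF finite_bits])
  show "s \<in> bits u" using div_power_eq_1[OF assms] by (simp add: bits_def)
  fix m assume "m \<in> bits u"
  show "m \<le> s"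
  proof (rule ccontr)
    assume "\<not> m \<le> s"
    then have "(2::nat) ^ Suc s \<le> 2 ^ m" by (intro power_increasing) simp_all
    then have "u div 2 ^ m = 0" using assms(2) by simp
    with \<open>m \<in> bits u\<close> show False by (simp add: bits_def)
  qed
qed

text \<open>Unlike lam and mu, which are Min and Max of a set, these are evidently computable.\<close>

definition lsb :: "nat \<Rightarrow> nat" where
  "lsb u = (\<Sum>m<u. of_bool (u mod 2 ^ Suc m = 0))"

definition msb :: "nat \<Rightarrow> nat" where
  "msb u = (\<Sum>m<u. of_bool (2 ^ Suc m \<le> u))"

lemma lsb_eqI:
  assumes "2 ^ n dvd u" "\<not> 2 ^ Suc n dvd u"
  shows "lsb u = n"
proof -
  have "0 < u" using assms(2) by (rule contrapos_np) simp
  have "u mod 2 ^ Suc m = 0 \<longleftrightarrow> m < n" for m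
  proof
    assume "u mod 2 ^ Suc m = 0"
    then have "2 ^ Suc m dvd u" by (simp add: dvd_eq_mod_eq_0)
    then show "m < n"
      using assms(2) power_le_dvd[of 2 "Suc m" u "Suc n"] by (meson Suc_le_mono not_less)
  next
    assume "m < n"
    then show "u mod 2 ^ Suc m = 0"
      using assms(1) power_le_dvd[of 2 n u "Suc m"] by simp
  qed
  then show ?thesis
    unfolding lsb_def using sum_of_bool_less less_if_power_dvd[OF \<open>0 < u\<close> assms(1)] by simp
qed

lemma msb_eqI:
  assumes "2 ^ s \<le> u" "u < 2 ^ Suc s"
  shows "msb u = s"
proof -
  have "2 ^ Suc m \<le> u \<longleftrightarrow> m < s" for m
  proof
    assume "2 ^ Suc m \<le> u"
    then have "(2::nat) ^ Suc m < 2 ^ Suc s" using assms(2) by linarith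
    then show "m < s" by simp
  next
    assume "m < s"
    then have "(2::nat) ^ Suc m \<le> 2 ^ s" by (intro power_increasing) simp_all
    then show "2 ^ Suc m \<le> u" using assms(1) by linarith
  qed
  then show ?thesis
    unfolding msb_def using sum_of_bool_less less_if_power_le[OF assms(1)] by simp
qed

lemma
  assumes "0 < u"
  shows power_lam_dvd: "2 ^ lam u dvd u"
    and not_power_Suc_lam_dvd: "\<not> 2 ^ Suc (lam u) dvd u"
    and lsb_eq_lam: "lsb u = lam u"
  using exact_power_dvd_exists[OF assms] lam_eqI lsb_eqI by metis+

lemma
  assumes "0 < u"
  shows power_mu_le: "2 ^ mu u \<le> u"
    and less_power_Suc_mu: "u < 2 ^ Suc (mu u)"
    and msb_eq_mu: "msb u = mu u"
  using power_bounds_exist[OF assms] mu_eqI msb_eqI by metis+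

lemma B_iff: "v \<in> B n \<longleftrightarrow> 2 ^ n \<le> v \<and> v < 2 ^ Suc n"
proof
  assume "v \<in> B n"
  then show "2 ^ n \<le> v \<and> v < 2 ^ Suc n"
    using power_mu_le less_power_Suc_mu by (auto simp: B_def)
next
  assume "2 ^ n \<le> v \<and> v < 2 ^ Suc n"
  moreover have "(0::nat) < 2 ^ n" by simp
  ultimately show "v \<in> B n"
    using mu_eqI by (auto simp: B_def)
qed

definition digit :: "nat \<Rightarrow> nat \<Rightarrow> nat \<Rightarrow> nat" where
  "digit b x m = x div b ^ m mod b"

definition prefix :: "nat \<Rightarrow> nat \<Rightarrow> nat" where
  "prefix x m = x div 2 ^ m * 2 ^ m"

lemma digit_eq_0_if_le:
  assumes "x \<le> m"
  shows "digit 2 x m = 0"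
proof -
  have "x < 2 ^ m" using assms less_if_power_le[of m x] by (meson not_le)
  then show ?thesis by (simp add: digit_def)
qed

lemma prefix_le: "prefix x m \<le> x"
  by (simp add: prefix_def div_times_less_eq_dividend)

lemma lsb_prefix:
  assumes "digit 2 x m = 1"
  shows "lsb (prefix x m) = m"
proof (rule lsb_eqI)
  have "odd (x div 2 ^ m)" using assms by (simp add: digit_def odd_iff_mod_2_eq_one)
  then show "\<not> 2 ^ Suc m dvd prefix x m"
    by (auto simp: prefix_def mult.commute[of 2])
  show "2 ^ m dvd prefix x m" by (simp add: prefix_def)
qed

lemma
  assumes "2 ^ Suc n dvd w" "v < 2 ^ Suc n" "n < m"
  shows digit_add_high: "digit 2 (w + v) m = digit 2 w m"
    and prefix_add_high: "prefix (w + v) m = prefix w m"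
proof -
  obtain q where q: "w = 2 ^ Suc n * q" using assms(1) ..
  have "m = Suc n + (m - Suc n)" using assms(3) by simp
  then have "(2::nat) ^ m = 2 ^ Suc n * 2 ^ (m - Suc n)" by (metis power_add)
  moreover have "(w + v) div 2 ^ Suc n = w div 2 ^ Suc n"
    using q assms(2) by simp
  ultimately have "(w + v) div 2 ^ m = w div 2 ^ m"
    by (simp add: div_mult2_eq)
  then show "digit 2 (w + v) m = digit 2 w m" "prefix (w + v) m = prefix w m"
    by (simp_all add: digit_def prefix_def)
qed

lemma
  assumes "2 ^ Suc n dvd w" "m \<le> n"
  shows digit_add_low: "digit 2 (w + v) m = digit 2 v m"
    and digit_low: "digit 2 w m = 0"
    and prefix_add_low: "prefix (w + v) m = w + prefix v m"
proof -
  obtain q where q: "w = 2 ^ Suc n * q" using assms(1) ..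
  have "(2::nat) ^ Suc n = 2 ^ m * 2 ^ (Suc n - m)"
    using assms(2) by (simp flip: power_add)
  then have w: "w = 2 ^ m * (2 ^ (Suc n - m) * q)" and "even (2 ^ (Suc n - m) * q :: nat)"
    using q assms(2) by simp_all
  then show "digit 2 (w + v) m = digit 2 v m" "digit 2 w m = 0"
    by (auto simp: digit_def mod_add_left_eq[symmetric])
  have "(w + v) div 2 ^ m = 2 ^ (Suc n - m) * q + v div 2 ^ m"
    using w by simp
  then show "prefix (w + v) m = w + prefix v m"
    unfolding prefix_def using w by (simp add: algebra_simps)
qed

lemma
  assumes "2 ^ n \<le> v" "v < 2 ^ Suc n"
  shows digit_top: "digit 2 v n = 1"
    and prefix_top: "prefix v n = 2 ^ n"
  using div_power_eq_1[OF assms] by (simp_all add: digit_def prefix_def)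

definition prefix_sum :: "(nat \<Rightarrow> nat) \<Rightarrow> nat \<Rightarrow> nat \<Rightarrow> nat" where
  "prefix_sum D N x = (\<Sum>m<N. digit 2 x m * D (prefix x m))"

lemma prefix_sum_cong:
  assumes "\<And>m. m < N \<Longrightarrow> digit 2 x m = 1 \<Longrightarrow> D (prefix x m) = D' (prefix x m)"
  shows "prefix_sum D N x = prefix_sum D' N x"
  unfolding prefix_sum_def
proof (rule sum.cong)
  fix m assume "m \<in> {..<N}"
  then show "digit 2 x m * D (prefix x m) = digit 2 x m * D' (prefix x m)"
    using assms[of m] by (cases "digit 2 x m = 0") (auto simp: digit_def)
qed simp

lemma prefix_sum_eq_if_le:
  assumes "x \<le> N"
  shows "prefix_sum D N x = prefix_sum D x x"
  unfolding prefix_sum_def using assms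
  by (intro sum.mono_neutral_right) (auto simp: digit_eq_0_if_le)

lemma sum_lessThan_split:
  assumes "n < (N::nat)"
  shows "(\<Sum>m<N. g m) = (\<Sum>m<n. g m) + g n + (\<Sum>m\<in>{Suc n..<N}. g m)"
  using assms sum.atLeastLessThan_concat[of 0 "Suc n" N g] by (simp add: lessThan_atLeast0)

lemma prefix_sum_add:
  assumes "2 ^ Suc n dvd w" "2 ^ n \<le> v" "v < 2 ^ Suc n" "w + v \<le> N"
  shows "prefix_sum D N (w + v) = prefix_sum D n (w + v) + D (w + 2 ^ n) + prefix_sum D N w"
proof -
  have "n < N" using less_if_power_le[OF assms(2)] assms(4) by linarith
  have "(\<Sum>m\<in>{Suc n..<N}. digit 2 (w + v) m * D (prefix (w + v) m))
      = (\<Sum>m\<in>{Suc n..<N}. digit 2 w m * D (prefix w m))"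
    using digit_add_high[OF assms(1,3)] prefix_add_high[OF assms(1,3)] by simp
  moreover have "digit 2 (w + v) n * D (prefix (w + v) n) = D (w + 2 ^ n)"
    using digit_add_low[OF assms(1)] prefix_add_low[OF assms(1)] digit_top[OF assms(2,3)]
      prefix_top[OF assms(2,3)] by simp
  moreover have "prefix_sum D N w = (\<Sum>m\<in>{Suc n..<N}. digit 2 w m * D (prefix w m))"
    unfolding prefix_sum_def sum_lessThan_split[OF \<open>n < N\<close>] using digit_low[OF assms(1)] by simp
  ultimately show ?thesis
    unfolding prefix_sum_def sum_lessThan_split[OF \<open>n < N\<close>] by simp
qed

section \<open>The colouring\<close>

definition parent :: "nat \<Rightarrow> nat" where
  "parent u = u - 2 ^ lsb u"

text \<open>For u = w + 2^n with n = lsb u, query f u asks for Q(n, lam w, mu w), coded as in oracle_of.\<close>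

definition query :: "(nat \<Rightarrow> nat) \<Rightarrow> nat \<Rightarrow> nat" where
  "query f u = f (prod_encode (lsb u, prod_encode (lsb (parent u), msb (parent u))))"

definition target :: "(nat \<Rightarrow> nat) \<Rightarrow> nat \<Rightarrow> nat" where
  "target f u = parent u + (query f u - 1)"

text \<open>
  The bound on the answer holds for the oracles of the theorem; it keeps target f u below 2^K
  whenever u is, which the table computation below relies on.
\<close>

definition answered :: "(nat \<Rightarrow> nat) \<Rightarrow> nat \<Rightarrow> bool" where
  "answered f u \<longleftrightarrow> 0 < parent u \<and> 0 < query f u \<and> query f u \<le> 2 ^ Suc (lsb u)"

text \<open>
  The increment at u is chosen so that the colour of target f u exceeds that of parent u by one.
\<close>

definition delta_step :: "nat \<Rightarrow> (nat \<Rightarrow> nat) \<Rightarrow> (nat \<Rightarrow> nat) \<Rightarrow> nat \<Rightarrow> nat" where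
  "delta_step r f D u =
    (if answered f u then (r + 1 - prefix_sum D (lsb u) (target f u) mod r) mod r else 0)"

definition delta :: "nat \<Rightarrow> (nat \<Rightarrow> nat) \<Rightarrow> nat \<Rightarrow> nat" where
  "delta r f u = (delta_step r f ^^ Suc (lsb u)) (\<lambda>_. 0) u"

definition colour :: "nat \<Rightarrow> (nat \<Rightarrow> nat) \<Rightarrow> nat \<Rightarrow> nat" where
  "colour r f x = prefix_sum (delta r f) x x mod r"

lemma delta_step_cong:
  assumes "\<And>m. answered f u \<Longrightarrow> m < lsb u \<Longrightarrow> digit 2 (target f u) m = 1 \<Longrightarrow>
      D (prefix (target f u) m) = D' (prefix (target f u) m)"
  shows "delta_step r f D u = delta_step r f D' u"
  unfolding delta_step_def using prefix_sum_cong[of "lsb u" "target f u" D D'] assms by simp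

lemma delta_step_less: "0 < r \<Longrightarrow> delta_step r f D u < r"
  by (simp add: delta_step_def)

lemma funpow_delta_step_eq:
  "lsb u < t \<Longrightarrow> lsb u < t' \<Longrightarrow>
    (delta_step r f ^^ t) (\<lambda>_. 0) u = (delta_step r f ^^ t') (\<lambda>_. 0) u"
proof (induction "lsb u" arbitrary: u t t' rule: less_induct)
  case less
  obtain s s' where t: "t = Suc s" "t' = Suc s'"
    using less.prems by (meson lessE)
  have "delta_step r f ((delta_step r f ^^ s) (\<lambda>_. 0)) u = delta_step r f ((delta_step r f ^^ s') (\<lambda>_. 0)) u"
  proof (rule delta_step_cong)
    fix m assume "m < lsb u" "digit 2 (target f u) m = 1"
    then show "(delta_step r f ^^ s) (\<lambda>_. 0) (prefix (target f u) m)
        = (delta_step r f ^^ s') (\<lambda>_. 0) (prefix (target f u) m)"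
      using less.prems t by (intro less.hyps) (simp_all add: lsb_prefix)
  qed
  then show ?case using t by simp
qed

lemma delta_unfold: "delta r f u = delta_step r f (delta r f) u"
proof -
  have "delta r f u = delta_step r f ((delta_step r f ^^ lsb u) (\<lambda>_. 0)) u"
    by (simp add: delta_def)
  also have "\<dots> = delta_step r f (delta r f) u"
  proof (rule delta_step_cong)
    fix m assume "m < lsb u" "digit 2 (target f u) m = 1"
    then show "(delta_step r f ^^ lsb u) (\<lambda>_. 0) (prefix (target f u) m) = delta r f (prefix (target f u) m)"
      unfolding delta_def by (intro funpow_delta_step_eq) (simp_all add: lsb_prefix)
  qed
  finally show ?thesis .
qed

lemma mod_add_complement:
  assumes "0 < (r::nat)"
  shows "(S + (r + 1 - S mod r) mod r + H) mod r = (H + 1) mod r"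
proof -
  have "S + (r + 1 - S mod r) = S div r * r + r + 1"
    using mod_less_divisor[OF assms, of S] div_mult_mod_eq[of S r] by linarith
  then have "(S + (r + 1 - S mod r) mod r + H) mod r = (S div r * r + r + (H + 1)) mod r"
    by (metis add.assoc add.commute mod_add_left_eq mod_add_right_eq)
  also have "S div r * r + r + (H + 1) = H + 1 + (S div r + 1) * r"
    by simp
  finally show ?thesis by (simp only: mod_mult_self1)
qed

lemma colour_step:
  assumes "0 < r" "0 < w" "n < lam w"
    and "f (prod_encode (n, prod_encode (lam w, mu w))) = Suc v" "v \<in> B n"
  shows "colour r f (w + v) = (colour r f w + 1) mod r"
proof -
  define u where "u = w + 2 ^ n"
  have v: "2 ^ n \<le> v" "v < 2 ^ Suc n" using assms(5) by (simp_all add: B_iff)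
  have dvd: "2 ^ Suc n dvd w"
    using power_le_dvd[OF power_lam_dvd[OF assms(2)] Suc_leI[OF assms(3)]] .
  have "lsb u = n"
  proof (rule lsb_eqI)
    show "2 ^ n dvd u" using dvd by (auto simp: u_def dvd_mult_right)
    show "\<not> 2 ^ Suc n dvd u"
      using dvd by (simp add: u_def dvd_add_right_iff)
  qed
  then have "parent u = w" by (simp add: parent_def u_def)
  then have query: "query f u = Suc v"
    using assms(4) \<open>lsb u = n\<close> by (simp add: query_def lsb_eq_lam msb_eq_mu assms(2))
  define S where "S = prefix_sum (delta r f) n (w + v)"
  have "delta r f u = (r + 1 - S mod r) mod r"
    using delta_unfold[of r f u] \<open>lsb u = n\<close> \<open>parent u = w\<close> query v(2) assms(2)
    by (simp add: delta_step_def answered_def target_def S_def)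
  then have "colour r f (w + v) = (S + (r + 1 - S mod r) mod r + prefix_sum (delta r f) w w) mod r"
    unfolding colour_def prefix_sum_add[OF dvd v order.refl] prefix_sum_eq_if_le[OF le_add1]
    by (simp add: S_def u_def)
  also have "\<dots> = (prefix_sum (delta r f) w w + 1) mod r"
    by (rule mod_add_complement[OF assms(1)])
  finally show ?thesis by (simp add: colour_def mod_Suc_eq)
qed

section \<open>Computing the colouring\<close>

lemma power_Suc_lsb_dvd_parent:
  assumes "0 < u"
  shows "2 ^ Suc (lsb u) dvd parent u"
proof -
  obtain c where c: "u = 2 ^ lam u * c" using power_lam_dvd[OF assms] ..
  have "odd c"
  proof
    assume "even c"
    then obtain e where "c = 2 * e" ..
    then have "u = 2 ^ Suc (lam u) * e" using c by (simp add: ac_simps)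
    with not_power_Suc_lam_dvd[OF assms] show False by (metis dvd_triv_left)
  qed
  then obtain d where "c = Suc (2 * d)" by (metis oddE Suc_eq_plus1)
  then have "parent u = 2 ^ Suc (lam u) * d"
    using c by (simp add: parent_def lsb_eq_lam[OF assms])
  then show ?thesis by (simp add: lsb_eq_lam[OF assms])
qed

lemma add_le_if_dvd_less:
  assumes "(d::nat) dvd a" "d dvd b" "a < b"
  shows "a + d \<le> b"
proof -
  obtain i j where "a = d * i" "b = d * j" using assms(1,2) by (auto elim!: dvdE)
  moreover from this assms(3) have "Suc i \<le> j" by simp
  ultimately show ?thesis by (metis mult_Suc_right mult_le_mono2 add.commute)
qed

lemma target_less:
  assumes "answered f u" "u < 2 ^ K"
  shows "target f u < 2 ^ K"
proof -
  have "0 < u" using assms(1) by (auto simp: answered_def parent_def)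
  have "2 ^ lsb u \<le> u"
    using dvd_imp_le[OF power_lam_dvd[OF \<open>0 < u\<close>] \<open>0 < u\<close>] by (simp add: lsb_eq_lam[OF \<open>0 < u\<close>])
  then have "lsb u < K" using assms(2) by (metis le_less_trans nat_power_less_imp_less zero_less_numeral)
  then have "2 ^ Suc (lsb u) dvd (2::nat) ^ K" by (intro le_imp_power_dvd) simp
  moreover have "parent u < 2 ^ K" using assms(2) by (simp add: parent_def)
  ultimately have "parent u + 2 ^ Suc (lsb u) \<le> 2 ^ K"
    using power_Suc_lsb_dvd_parent[OF \<open>0 < u\<close>] by (intro add_le_if_dvd_less)
  moreover have "query f u - 1 < 2 ^ Suc (lsb u)"
    using assms(1) unfolding answered_def by linarith
  ultimately show ?thesis by (simp add: target_def)
qed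

lemma digit_sum_power:
  assumes "\<And>z. a z < r" "z\<^sub>0 < N"
  shows "digit r (\<Sum>z<N. a z * r ^ z) z\<^sub>0 = a z\<^sub>0"
  using assms(2)
proof (induction N)
  case (Suc N)
  have bound: "(\<Sum>z<M. a z * r ^ z) < r ^ M" for M
  proof (induction M)
    case (Suc M)
    have "(\<Sum>z<Suc M. a z * r ^ z) < (Suc (a M)) * r ^ M"
      using Suc.IH by simp
    also have "\<dots> \<le> r * r ^ M"
      using assms(1)[of M] by (intro mult_right_mono) simp_all
    finally show ?case by simp
  qed simp
  let ?S = "\<Sum>z<N. a z * r ^ z"
  show ?case
  proof (cases "z\<^sub>0 = N")
    case True
    have "(?S + a N * r ^ N) div r ^ N = a N"
      using bound[of N] assms(1)[of N] by simp
    then show ?thesis using True assms(1)[of N] by (simp add: digit_def)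
  next
    case False
    then have "z\<^sub>0 < N" using Suc.prems by simp
    then have "r ^ N = r ^ Suc z\<^sub>0 * r ^ (N - Suc z\<^sub>0)"
      by (metis Suc_leI le_add_diff_inverse power_add)
    then have eq: "a N * r ^ N = r * (a N * r ^ (N - Suc z\<^sub>0)) * r ^ z\<^sub>0"
      by (simp add: ac_simps)
    have "(?S + a N * r ^ N) div r ^ z\<^sub>0 = ?S div r ^ z\<^sub>0 + r * (a N * r ^ (N - Suc z\<^sub>0))"
      unfolding eq using assms(1)[of 0] by (subst div_mult_self1) simp_all
    then show ?thesis
      using Suc.IH[OF \<open>z\<^sub>0 < N\<close>] by (simp add: digit_def)
  qed
qed simp

text \<open>
  A number T stands for the function digit r T; table_step performs one delta_step on all
  arguments below 2^K.
\<close>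

definition table_step :: "nat \<Rightarrow> (nat \<Rightarrow> nat) \<Rightarrow> nat \<Rightarrow> nat \<Rightarrow> nat" where
  "table_step r f K T = (\<Sum>z<2 ^ K. delta_step r f (digit r T) z * r ^ z)"

lemma digit_funpow_table_step:
  assumes "0 < r" "z < 2 ^ K"
  shows "digit r ((table_step r f K ^^ t) 0) z = (delta_step r f ^^ t) (\<lambda>_. 0) z"
  using assms(2)
proof (induction t arbitrary: z)
  case (Suc t)
  have "digit r ((table_step r f K ^^ Suc t) 0) z = delta_step r f (digit r ((table_step r f K ^^ t) 0)) z"
    unfolding funpow.simps comp_apply table_step_def
    using Suc.prems by (intro digit_sum_power delta_step_less assms(1))
  also have "\<dots> = delta_step r f ((delta_step r f ^^ t) (\<lambda>_. 0)) z"
  proof (rule delta_step_cong)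
    fix m assume "answered f z"
    then have "prefix (target f z) m < 2 ^ K"
      using target_less[OF _ Suc.prems] prefix_le le_less_trans by blast
    then show "digit r ((table_step r f K ^^ t) 0) (prefix (target f z) m)
        = (delta_step r f ^^ t) (\<lambda>_. 0) (prefix (target f z) m)"
      by (rule Suc.IH)
  qed
  finally show ?case by simp
qed (simp add: digit_def)

lemma colour_eq_table:
  assumes "0 < r"
  shows "colour r f x = prefix_sum (digit r ((table_step r f x ^^ Suc x) 0)) x x mod r"
proof -
  have "prefix_sum (delta r f) x x = prefix_sum (digit r ((table_step r f x ^^ Suc x) 0)) x x"
  proof (rule prefix_sum_cong)
    fix m assume "m < x" "digit 2 x m = 1"
    have "prefix x m < 2 ^ x"
      using prefix_le[of x m] less_exp[of x] by linarith
    then show "delta r f (prefix x m) = digit r ((table_step r f x ^^ Suc x) 0) (prefix x m)"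
      unfolding delta_def digit_funpow_table_step[OF assms \<open>prefix x m < 2 ^ x\<close>]
      using \<open>m < x\<close> \<open>digit 2 x m = 1\<close> by (intro funpow_delta_step_eq) (simp_all add: lsb_prefix)
  qed
  then show ?thesis by (simp add: colour_def)
qed

lemma computable_digit [computable_intros]:
  "computable k A \<Longrightarrow> computable k X \<Longrightarrow> computable k M \<Longrightarrow>
    computable k (\<lambda>f xs. digit (A f xs) (X f xs) (M f xs))"
  unfolding digit_def by (intro computable_intros)

lemma computable_prefix [computable_intros]:
  "computable k X \<Longrightarrow> computable k M \<Longrightarrow> computable k (\<lambda>f xs. prefix (X f xs) (M f xs))"
  unfolding prefix_def by (intro computable_intros)

lemma computable_lsb [computable_intros]:
  "computable k A \<Longrightarrow> computable k (\<lambda>f xs. lsb (A f xs))"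
  by (rule computable_compose_unary) (unfold lsb_def, intro computable_intros | simp)+

lemma computable_msb [computable_intros]:
  "computable k A \<Longrightarrow> computable k (\<lambda>f xs. msb (A f xs))"
  by (rule computable_compose_unary) (unfold msb_def, intro computable_intros | simp)+

lemma computable_prod_encode [computable_intros]:
  assumes "computable k A" "computable k C"
  shows "computable k (\<lambda>f xs. prod_encode (A f xs, C f xs))"
proof -
  have "computable k (\<lambda>f xs. (A f xs + C f xs) * Suc (A f xs + C f xs) div 2 + A f xs)"
    by (intro computable_intros assms)
  then show ?thesis by (simp add: prod_encode_def triangle_def)
qed

lemma computable_delta_step_table [computable_intros]:
  "computable k T \<Longrightarrow> computable k U \<Longrightarrow>
    computable k (\<lambda>f xs. delta_step r f (digit r (T f xs)) (U f xs))"
  by (rule computable_compose_binary)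
     (unfold delta_step_def answered_def target_def query_def parent_def prefix_sum_def,
      intro computable_intros | simp)+

lemma colour_computable:
  assumes "0 < r"
  shows "\<exists>e. \<forall>f. computes f e (colour r f)"
proof -
  have "computable 1 (\<lambda>f xs.
      prefix_sum (digit r ((table_step r f (xs ! 0) ^^ Suc (xs ! 0)) 0)) (xs ! 0) (xs ! 0) mod r)"
    unfolding prefix_sum_def table_step_def by (intro computable_intros | simp)+
  then obtain e where "\<forall>f xs. length xs = 1 \<longrightarrow> eval f e xs (colour r f (xs ! 0))"
    unfolding computable_def colour_eq_table[OF assms] by blast
  then have "computes f e (colour r f)" for f
    unfolding computes_def by (metis One_nat_def length_Cons list.size(3) nth_Cons_0)
  then show ?thesis by blast
qed

theorem corollary3p2:
  fixes r :: nat
  assumes "r > 1"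
  shows "\<exists>e. \<forall>Q :: nat \<Rightarrow> nat \<Rightarrow> nat \<Rightarrow> nat option.
           recursive_set3 {(n, k, s). Q n k s \<noteq> None}
         \<and> (\<forall>n k s v. Q n k s = Some v \<longrightarrow> v \<in> B n)
         \<longrightarrow> (\<exists>c. computes (oracle_of Q) e c \<and> (\<forall>x. c x < r)
               \<and> (\<forall>w > 0. \<forall>n < lam w. \<forall>v. Q n (lam w) (mu w) = Some v
                     \<longrightarrow> c (w + v) mod r = (c w + 1) mod r))"
proof -
  from assms have "0 < r" by simp
  then obtain e where e: "\<forall>f. computes f e (colour r f)" using colour_computable by blast
  show ?thesis
  proof (intro exI[of _ e] allI impI)
    fix Q :: "nat \<Rightarrow> nat \<Rightarrow> nat \<Rightarrow> nat option"
    assume "recursive_set3 {(n, k, s). Q n k s \<noteq> None} \<and> (\<forall>n k s v. Q n k s = Some v \<longrightarrow> v \<in> B n)"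
    then have B: "\<And>n k s v. Q n k s = Some v \<Longrightarrow> v \<in> B n" by blast
    let ?c = "colour r (oracle_of Q)"
    have "?c (w + v) mod r = (?c w + 1) mod r"
      if "0 < w" "n < lam w" "Q n (lam w) (mu w) = Some v" for w n v
      using colour_step[OF \<open>0 < r\<close> that(1,2) _ B[OF that(3)]] that(3) by (simp add: oracle_of_def)
    moreover have "?c x < r" for x
      using \<open>0 < r\<close> by (simp add: colour_def)
    ultimately show "\<exists>c. computes (oracle_of Q) e c \<and> (\<forall>x. c x < r)
        \<and> (\<forall>w > 0. \<forall>n < lam w. \<forall>v. Q n (lam w) (mu w) = Some v \<longrightarrow> c (w + v) mod r = (c w + 1) mod r)"
      using e by blast
  qed
qed

end
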